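(* Let $\triangle ABC$ have side lengths $a=|BC|>b=|CA|>c=|AB|$ and angles $\alpha=\angle A$, $\beta=\angle B$, $\gamma=\angle C$, and suppose $60^\circ\le\beta<80^\circ$, $60^\circ<\alpha<90^\circ$, and $\alpha+\beta/2<120^\circ$. For $x\in\{a,b,c\}$ let $W_x$ denote the largest area of an equilateral triangle contained in the closed triangle $\triangle ABC$ having one of its sides lying on side $x$. Then the maximum of $W_a,W_b,W_c$ is attained on the short side $c$, and the minimum is attained on the middle side $b$.
   Context: An equilateral triangle of largest area contained in $\triangle ABC$ with one side lying on a given side of $\triangle ABC$ is called the wedged equilateral triangle (WET) on that side; it need not have all three vertices on the boundary of $\triangle ABC$. The max (resp. min) WET is the one of largest (resp. smallest) area among the three sides. *)

theory Defs
  imports "HOL-Analysis.Analysis"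
begin

definition angle_at :: "real^2 \<Rightarrow> real^2 \<Rightarrow> real^2 \<Rightarrow> real" where
  "angle_at V P Q = arccos (((P - V) \<bullet> (Q - V)) / (norm (P - V) * norm (Q - V)))"

definition equilateral :: "real^2 \<Rightarrow> real^2 \<Rightarrow> real^2 \<Rightarrow> bool" where
  "equilateral P Q R \<longleftrightarrow> P \<noteq> Q \<and> dist P Q = dist Q R \<and> dist Q R = dist R P"

definition eq_area :: "real \<Rightarrow> real" where
  "eq_area s = sqrt 3 / 4 * s ^ 2"

definition WET_area :: "real^2 \<Rightarrow> real^2 \<Rightarrow> real^2 \<Rightarrow> real" where
  "WET_area X Y Z = Sup {eq_area (dist P Q) | P Q R.
      equilateral P Q R \<and> convex hull {P, Q, R} \<subseteq> convex hull {X, Y, Z}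
      \<and> closed_segment P Q \<subseteq> closed_segment X Y}"

end

theory Submission
  imports Defs
begin

text \<open>
  An equilateral triangle with its base on the side XY of a triangle XYZ has its apex above the
  midpoint of the base, at height \<open>sqrt 3 / 2\<close> times the side, and the apex must stay inside
  the angles at X and at Y. If both angles are at least \<open>pi / 3\<close>, the whole side XY is a base.
  If the angle \<open>\<theta>\<close> at X is at most \<open>pi / 3\<close> and the one at Y at least \<open>pi / 3\<close>, the largest
  triangle has a base vertex at Y and its apex on XZ, and its side is
  \<open>dist X Y * sin \<theta> / sin (\<theta> + pi / 3)\<close>.

  Under the hypotheses, \<open>\<gamma> = pi - \<alpha> - \<beta> < pi / 3 \<le> \<alpha>, \<beta>\<close>, so the wedged triangle on c has
  side c, and those on a and b have sides \<open>a f\<close> and \<open>b f\<close> with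
  \<open>f = sin \<gamma> / sin (\<gamma> + pi / 3)\<close>. Hence the one on b is smaller than the one on a, and by the
  law of sines \<open>a f \<le> c\<close> amounts to \<open>sin \<alpha> \<le> sin (\<gamma> + pi / 3) = sin (\<alpha> + \<beta> - pi / 3)\<close>, which
  holds because \<open>\<alpha> \<le> \<alpha> + \<beta> - pi / 3 \<le> pi - \<alpha>\<close>; the last inequality is \<open>\<alpha> + \<beta> / 2 \<le> 2 * pi / 3\<close>.
\<close>

section \<open>The cross product in the plane\<close>

definition cross2 :: "real^2 \<Rightarrow> real^2 \<Rightarrow> real" where
  "cross2 u v = u$1 * v$2 - u$2 * v$1"

lemma inner_real2: "u \<bullet> v = u$1 * v$1 + u$2 * v$2" for u v :: "real^2"
  by (simp add: inner_vec_def sum_2)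

lemma lagrange_identity_real2: "(u \<bullet> u) * (v \<bullet> v) = (u \<bullet> v)\<^sup>2 + (cross2 u v)\<^sup>2"
  by (simp add: inner_real2 cross2_def power2_eq_square algebra_simps)

lemma cross2_cyclic: "cross2 (Z - Y) (X - Y) = cross2 (Y - X) (Z - X)"
  by (simp add: cross2_def algebra_simps)

lemma cross2_scaleR_left: "cross2 (a *\<^sub>R u) v = a * cross2 u v"
  by (simp add: cross2_def algebra_simps)

lemma cross2_add_scaleR_right: "cross2 u (a *\<^sub>R u + b *\<^sub>R v) = b * cross2 u v"
  by (simp add: cross2_def algebra_simps)

lemma cross2_eq_0_imp_parallel:
  assumes "cross2 u w = 0" and "u \<noteq> 0"
  shows "w = ((u \<bullet> w) / (u \<bullet> u)) *\<^sub>R u"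
proof -
  have "(u \<bullet> u) *\<^sub>R w = (u \<bullet> w) *\<^sub>R u"
    using assms(1) by (simp add: vec_eq_iff forall_2 inner_real2 cross2_def algebra_simps)
  then show ?thesis
    using assms(2) by (simp add: eq_vector_fraction_iff)
qed

lemma cross2_nonzero_if_not_collinear:
  assumes "\<not> collinear {X, Y, Z}"
  shows "cross2 (Y - X) (Z - X) \<noteq> 0"
proof
  assume "cross2 (Y - X) (Z - X) = 0"
  then have "collinear {0, Y - X, Z - X}"
    using cross2_eq_0_imp_parallel[of "Y - X" "Z - X"] by (auto simp: collinear_lemma)
  then have "collinear {Y, X, Z}"
    by (subst collinear_3) simp
  with assms show False
    by (simp add: insert_commute)
qed

lemma distinct_if_not_collinear:
  assumes "\<not> collinear {A, B, C}"
  shows "A \<noteq> B" "B \<noteq> C" "A \<noteq> C"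
  using assms by (auto simp: collinear_2 insert_commute)

section \<open>Angles of a triangle\<close>

lemma angle_at_commute: "angle_at V P Q = angle_at V Q P"
  by (simp add: angle_at_def inner_commute mult.commute)

lemma angle_at_cosine_bounds:
  "-1 \<le> (P - V) \<bullet> (Q - V) / (norm (P - V) * norm (Q - V))"
  "(P - V) \<bullet> (Q - V) / (norm (P - V) * norm (Q - V)) \<le> 1"
  using Cauchy_Schwarz_ineq2[of "P - V" "Q - V"]
  by (auto simp: divide_le_eq le_divide_eq abs_le_iff zero_less_mult_iff)

lemma angle_at_bounds: "0 \<le> angle_at V P Q" "angle_at V P Q \<le> pi"
  unfolding angle_at_def using angle_at_cosine_bounds[of P V Q]
  by (simp_all add: arccos_lbound arccos_ubound)

lemma cos_angle_at:
  "norm (P - V) * norm (Q - V) * cos (angle_at V P Q) = (P - V) \<bullet> (Q - V)"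
  using angle_at_cosine_bounds[of P V Q] by (auto simp: angle_at_def)

lemma sin_angle_at:
  "norm (P - V) * norm (Q - V) * sin (angle_at V P Q) = \<bar>cross2 (P - V) (Q - V)\<bar>"
proof (cases "P = V \<or> Q = V")
  case True
  then show ?thesis by (auto simp: cross2_def)
next
  case False
  define n where "n = norm (P - V) * norm (Q - V)"
  have "n > 0" using False by (simp add: n_def)
  have "((P - V) \<bullet> (Q - V) / n)\<^sup>2 + (cross2 (P - V) (Q - V) / n)\<^sup>2
      = (((P - V) \<bullet> (Q - V))\<^sup>2 + (cross2 (P - V) (Q - V))\<^sup>2) / n\<^sup>2"
    by (simp add: power_divide add_divide_distrib)
  also have "\<dots> = 1"
    using False
    by (simp add: n_def power_mult_distrib flip: lagrange_identity_real2 power2_norm_eq_inner)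
  finally have "((P - V) \<bullet> (Q - V) / n)\<^sup>2 + (cross2 (P - V) (Q - V) / n)\<^sup>2 = 1" .
  then have "1 - ((P - V) \<bullet> (Q - V) / n)\<^sup>2 = (cross2 (P - V) (Q - V) / n)\<^sup>2"
    by simp
  then have "sin (angle_at V P Q) = \<bar>cross2 (P - V) (Q - V)\<bar> / n"
    using angle_at_cosine_bounds[of P V Q] \<open>n > 0\<close>
    by (simp add: angle_at_def sin_arccos flip: n_def)
  then show ?thesis
    using \<open>n > 0\<close> by (simp add: field_simps flip: n_def)
qed

lemma sin_angle_at_add_pi_div_3:
  "2 * (norm (P - V) * norm (Q - V)) * sin (angle_at V P Q + pi / 3)
     = sqrt 3 * ((P - V) \<bullet> (Q - V)) + \<bar>cross2 (P - V) (Q - V)\<bar>"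
proof -
  let ?n = "norm (P - V) * norm (Q - V)" and ?\<theta> = "angle_at V P Q"
  have "2 * ?n * sin (?\<theta> + pi / 3) = sqrt 3 * (?n * cos ?\<theta>) + ?n * sin ?\<theta>"
    by (simp add: sin_add sin_60 cos_60 algebra_simps)
  then show ?thesis
    by (simp only: sin_angle_at cos_angle_at)
qed

lemma sin_pi_div_3_minus_angle_at:
  "2 * (norm (P - V) * norm (Q - V)) * sin (pi / 3 - angle_at V P Q)
     = sqrt 3 * ((P - V) \<bullet> (Q - V)) - \<bar>cross2 (P - V) (Q - V)\<bar>"
proof -
  let ?n = "norm (P - V) * norm (Q - V)" and ?\<theta> = "angle_at V P Q"
  have "2 * ?n * sin (pi / 3 - ?\<theta>) = sqrt 3 * (?n * cos ?\<theta>) - ?n * sin ?\<theta>"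
    by (simp add: sin_diff sin_60 cos_60 algebra_simps)
  then show ?thesis
    by (simp only: sin_angle_at cos_angle_at)
qed

lemma sqrt3_inner_le_cross_if_angle_at_ge:
  assumes "pi / 3 \<le> angle_at V P Q"
  shows "sqrt 3 * ((P - V) \<bullet> (Q - V)) \<le> \<bar>cross2 (P - V) (Q - V)\<bar>"
proof -
  have "0 \<le> sin (angle_at V P Q - pi / 3)"
    using assms angle_at_bounds[of V P Q] by (intro sin_ge_zero) auto
  then have "2 * (norm (P - V) * norm (Q - V)) * sin (pi / 3 - angle_at V P Q) \<le> 0"
    using sin_minus[of "angle_at V P Q - pi / 3"] by (simp add: mult_nonneg_nonpos)
  then show ?thesis
    by (simp add: sin_pi_div_3_minus_angle_at)
qed

lemma sqrt3_inner_le_cross_if_angle_at_ge':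
  assumes "pi / 3 \<le> angle_at Y Z X"
  shows "sqrt 3 * ((Y - X) \<bullet> (Y - X) - (Y - X) \<bullet> (Z - X)) \<le> \<bar>cross2 (Y - X) (Z - X)\<bar>"
proof -
  have "(Z - Y) \<bullet> (X - Y) = (Y - X) \<bullet> (Y - X) - (Y - X) \<bullet> (Z - X)"
    by (simp add: inner_diff_left inner_diff_right inner_commute)
  then show ?thesis
    using sqrt3_inner_le_cross_if_angle_at_ge[OF assms] cross2_cyclic[where X = X and Y = Y and Z = Z]
    by simp
qed

lemma cross_le_sqrt3_inner_if_angle_at_le:
  assumes "angle_at V P Q \<le> pi / 3"
  shows "\<bar>cross2 (P - V) (Q - V)\<bar> \<le> sqrt 3 * ((P - V) \<bullet> (Q - V))"
proof -
  have "0 \<le> sin (pi / 3 - angle_at V P Q)"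
    using assms angle_at_bounds[of V P Q] by (intro sin_ge_zero) auto
  then have "0 \<le> 2 * (norm (P - V) * norm (Q - V)) * sin (pi / 3 - angle_at V P Q)"
    by simp
  then show ?thesis
    by (simp add: sin_pi_div_3_minus_angle_at)
qed

lemma law_of_sines:
  assumes "\<not> collinear {A, B, C}"
  shows "dist A B * sin (angle_at A B C) = dist B C * sin (angle_at C A B)"
proof -
  have "A \<noteq> C" using distinct_if_not_collinear[OF assms] by simp
  have "dist A C * (dist A B * sin (angle_at A B C)) = \<bar>cross2 (B - A) (C - A)\<bar>"
    using sin_angle_at[of B A C] by (simp add: dist_norm norm_minus_commute algebra_simps)
  also have "\<dots> = dist A C * (dist B C * sin (angle_at C A B))"
    using sin_angle_at[of A C B] cross2_cyclic[where X = B and Y = C and Z = A] cross2_cyclic[where X = A and Y = B and Z = C]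
    by (simp add: dist_norm norm_minus_commute algebra_simps)
  finally show ?thesis
    using \<open>A \<noteq> C\<close> by simp
qed

lemma cos_sin_add_angle_at:
  assumes "\<not> collinear {A, B, C}"
  shows "cos (angle_at A B C + angle_at B C A) = cos (pi - angle_at C A B)"
    and "sin (angle_at A B C + angle_at B C A) > 0"
proof -
  define \<alpha> \<beta> \<gamma> where "\<alpha> = angle_at A B C" and "\<beta> = angle_at B C A" and "\<gamma> = angle_at C A B"
  define a b c where "a = norm (C - B)" and "b = norm (C - A)" and "c = norm (B - A)"
  define D K where "D = (B - A) \<bullet> (C - A)" and "K = \<bar>cross2 (B - A) (C - A)\<bar>"
  have "K > 0"
    using cross2_nonzero_if_not_collinear[OF assms] by (simp add: K_def)
  have "a > 0" "b > 0" "c > 0"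
    using distinct_if_not_collinear[OF assms] by (auto simp: a_def b_def c_def)
  have cos\<alpha>: "c * b * cos \<alpha> = D" and sin\<alpha>: "c * b * sin \<alpha> = K"
    using cos_angle_at[of B A C] sin_angle_at[of B A C] by (simp_all add: \<alpha>_def b_def c_def D_def K_def)
  have "a * c * cos \<beta> = (C - B) \<bullet> (A - B)" and sin\<beta>: "a * c * sin \<beta> = K"
    using cos_angle_at[of C B A] sin_angle_at[of C B A] cross2_cyclic[where X = A and Y = B and Z = C]
    by (simp_all add: \<beta>_def a_def c_def K_def norm_minus_commute)
  moreover have "(C - B) \<bullet> (A - B) = c\<^sup>2 - D"
    by (simp add: c_def D_def power2_norm_eq_inner algebra_simps inner_diff_left inner_diff_right inner_commute)
  ultimately have cos\<beta>: "a * c * cos \<beta> = c\<^sup>2 - D" by simp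
  have "b * a * cos \<gamma> = (A - C) \<bullet> (B - C)"
    using cos_angle_at[of A C B] by (simp add: \<gamma>_def a_def b_def norm_minus_commute)
  moreover have "(A - C) \<bullet> (B - C) = b\<^sup>2 - D"
    by (simp add: b_def D_def power2_norm_eq_inner algebra_simps inner_diff_left inner_diff_right inner_commute)
  ultimately have cos\<gamma>: "b * a * cos \<gamma> = b\<^sup>2 - D" by simp
  have lagrange: "c\<^sup>2 * b\<^sup>2 = D\<^sup>2 + K\<^sup>2"
    by (simp add: b_def c_def D_def K_def power2_norm_eq_inner lagrange_identity_real2)
  have "c\<^sup>2 * a * b * cos (\<alpha> + \<beta>) = (c * b * cos \<alpha>) * (a * c * cos \<beta>) - (c * b * sin \<alpha>) * (a * c * sin \<beta>)"
    by (simp add: cos_add power2_eq_square algebra_simps)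
  also have "\<dots> = - c\<^sup>2 * (b\<^sup>2 - D)"
    unfolding cos\<alpha> cos\<beta> sin\<alpha> sin\<beta> using lagrange by (simp add: power2_eq_square algebra_simps)
  also have "\<dots> = c\<^sup>2 * a * b * cos (pi - \<gamma>)"
    by (simp flip: cos\<gamma>)
  finally have "cos (\<alpha> + \<beta>) = cos (pi - \<gamma>)"
    using \<open>a > 0\<close> \<open>b > 0\<close> \<open>c > 0\<close> by (simp del: cos_pi_minus)
  have "c\<^sup>2 * a * b * sin (\<alpha> + \<beta>) = (c * b * sin \<alpha>) * (a * c * cos \<beta>) + (c * b * cos \<alpha>) * (a * c * sin \<beta>)"
    by (simp add: sin_add power2_eq_square algebra_simps)
  also have "\<dots> = c\<^sup>2 * K"
    unfolding cos\<alpha> cos\<beta> sin\<alpha> sin\<beta> by (simp add: algebra_simps)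
  finally have "a * b * sin (\<alpha> + \<beta>) = K"
    using \<open>c > 0\<close> by simp
  then have "sin (\<alpha> + \<beta>) > 0"
    using \<open>a > 0\<close> \<open>b > 0\<close> \<open>K > 0\<close> by (metis mult_pos_pos zero_less_mult_pos)
  with \<open>cos (\<alpha> + \<beta>) = cos (pi - \<gamma>)\<close> show
      "cos (angle_at A B C + angle_at B C A) = cos (pi - angle_at C A B)"
      "sin (angle_at A B C + angle_at B C A) > 0"
    by (simp_all only: \<alpha>_def \<beta>_def \<gamma>_def)
qed

lemma angle_sum_triangle:
  assumes "\<not> collinear {A, B, C}"
  shows "angle_at A B C + angle_at B C A + angle_at C A B = pi"
proof -
  define \<alpha> \<beta> \<gamma> where "\<alpha> = angle_at A B C" and "\<beta> = angle_at B C A" and "\<gamma> = angle_at C A B"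
  have "\<alpha> + \<beta> < pi"
  proof (rule ccontr)
    assume "\<not> \<alpha> + \<beta> < pi"
    moreover have "\<alpha> + \<beta> \<le> 2 * pi"
      using angle_at_bounds(2)[of A B C] angle_at_bounds(2)[of B C A] by (simp add: \<alpha>_def \<beta>_def)
    ultimately have "sin (\<alpha> + \<beta>) \<le> 0"
      by (cases "\<alpha> + \<beta> = 2 * pi") (auto intro: sin_le_zero)
    with cos_sin_add_angle_at(2)[OF assms] show False
      by (simp add: \<alpha>_def \<beta>_def)
  qed
  then have "\<alpha> + \<beta> = arccos (cos (\<alpha> + \<beta>))"
    using angle_at_bounds(1)[of A B C] angle_at_bounds(1)[of B C A]
    by (intro arccos_cos[symmetric]) (auto simp: \<alpha>_def \<beta>_def)
  also have "\<dots> = arccos (cos (pi - \<gamma>))"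
    using cos_sin_add_angle_at(1)[OF assms] by (simp only: \<alpha>_def \<beta>_def \<gamma>_def)
  also have "\<dots> = pi - \<gamma>"
    using angle_at_bounds[of C A B] by (intro arccos_cos) (auto simp: \<gamma>_def)
  finally show ?thesis
    by (simp add: \<alpha>_def \<beta>_def \<gamma>_def)
qed

section \<open>Equilateral triangles with a side on a line\<close>

lemma equilateral_iff_apex:
  assumes "P \<noteq> Q"
  shows "equilateral P Q R \<longleftrightarrow>
    (R - P) \<bullet> (Q - P) = (dist P Q)\<^sup>2 / 2 \<and> \<bar>cross2 (Q - P) (R - P)\<bar> = sqrt 3 / 2 * (dist P Q)\<^sup>2"
proof -
  have dist_PQ: "dist P Q = norm (Q - P)" and dist_RP: "dist R P = norm (R - P)"
    by (simp_all add: dist_norm norm_minus_commute)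
  define s x y r where "s = (norm (Q - P))\<^sup>2" and "x = (R - P) \<bullet> (Q - P)"
    and "y = cross2 (Q - P) (R - P)" and "r = (norm (R - P))\<^sup>2"
  have "s > 0" using assms by (simp add: s_def)
  have lagrange: "s * r = x\<^sup>2 + y\<^sup>2"
    using lagrange_identity_real2[of "Q - P" "R - P"]
    by (simp add: s_def r_def x_def y_def power2_norm_eq_inner inner_commute)
  have "(dist Q R)\<^sup>2 = r - 2 * x + s"
    unfolding r_def x_def s_def dist_norm power2_norm_eq_inner
    by (simp add: inner_diff_left inner_diff_right inner_commute)
  moreover have "equilateral P Q R \<longleftrightarrow> (dist Q R)\<^sup>2 = (dist P Q)\<^sup>2 \<and> (dist R P)\<^sup>2 = (dist P Q)\<^sup>2"
    using assms by (auto simp: equilateral_def power2_eq_iff_nonneg)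
  ultimately have "equilateral P Q R \<longleftrightarrow> r - 2 * x + s = s \<and> r = s"
    by (simp add: r_def s_def dist_PQ dist_RP)
  also have "\<dots> \<longleftrightarrow> x = s / 2 \<and> y\<^sup>2 = (sqrt 3 / 2 * s)\<^sup>2"
  proof
    assume "r - 2 * x + s = s \<and> r = s"
    with lagrange show "x = s / 2 \<and> y\<^sup>2 = (sqrt 3 / 2 * s)\<^sup>2"
      by (auto simp: power2_eq_square power_mult_distrib algebra_simps)
  next
    assume "x = s / 2 \<and> y\<^sup>2 = (sqrt 3 / 2 * s)\<^sup>2"
    with lagrange \<open>s > 0\<close> have "s * r = s * s"
      by (simp add: power2_eq_square power_mult_distrib algebra_simps)
    with \<open>s > 0\<close> \<open>x = s / 2 \<and> _\<close> show "r - 2 * x + s = s \<and> r = s"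
      by simp
  qed
  also have "\<dots> \<longleftrightarrow> x = s / 2 \<and> \<bar>y\<bar> = sqrt 3 / 2 * s"
    using \<open>s > 0\<close> power2_eq_iff_nonneg[of "\<bar>y\<bar>" "sqrt 3 / 2 * s"] by simp
  finally show ?thesis
    by (simp add: s_def x_def y_def dist_PQ)
qed

lemma equilateral_on_base_iff:
  assumes "u \<noteq> 0" and "p \<noteq> q"
  shows "equilateral (X + p *\<^sub>R u) (X + q *\<^sub>R u) (X + l *\<^sub>R u + m *\<^sub>R w) \<longleftrightarrow>
    (l - p) * (u \<bullet> u) + m * (u \<bullet> w) = (q - p) / 2 * (u \<bullet> u)
    \<and> \<bar>m\<bar> * \<bar>cross2 u w\<bar> = sqrt 3 / 2 * \<bar>q - p\<bar> * (u \<bullet> u)"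
proof -
  define P Q R where "P = X + p *\<^sub>R u" and "Q = X + q *\<^sub>R u" and "R = X + l *\<^sub>R u + m *\<^sub>R w"
  have QP: "Q - P = (q - p) *\<^sub>R u" and RP: "R - P = (l - p) *\<^sub>R u + m *\<^sub>R w"
    by (simp_all add: P_def Q_def R_def algebra_simps)
  have "P \<noteq> Q"
    using assms QP by auto
  have "dist P Q = \<bar>q - p\<bar> * norm u"
    by (simp add: P_def Q_def dist_norm abs_minus_commute flip: scaleR_diff_left)
  then have dist_PQ_sq: "(dist P Q)\<^sup>2 = (q - p)\<^sup>2 * (u \<bullet> u)"
    by (simp add: power_mult_distrib power2_norm_eq_inner)
  have "(R - P) \<bullet> (Q - P) = (q - p) * ((l - p) * (u \<bullet> u) + m * (u \<bullet> w))"
    by (simp add: QP RP inner_add_left inner_commute algebra_simps)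
  moreover have "(dist P Q)\<^sup>2 / 2 = (q - p) * ((q - p) / 2 * (u \<bullet> u))"
    unfolding dist_PQ_sq by (simp add: power2_eq_square)
  ultimately have inner: "(R - P) \<bullet> (Q - P) = (dist P Q)\<^sup>2 / 2 \<longleftrightarrow>
      (l - p) * (u \<bullet> u) + m * (u \<bullet> w) = (q - p) / 2 * (u \<bullet> u)"
    using \<open>p \<noteq> q\<close> by simp
  have "\<bar>cross2 (Q - P) (R - P)\<bar> = \<bar>q - p\<bar> * (\<bar>m\<bar> * \<bar>cross2 u w\<bar>)"
    by (simp add: QP RP cross2_scaleR_left cross2_add_scaleR_right abs_mult)
  moreover have "sqrt 3 / 2 * (dist P Q)\<^sup>2 = \<bar>q - p\<bar> * (sqrt 3 / 2 * \<bar>q - p\<bar> * (u \<bullet> u))"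
  proof -
    have "(q - p)\<^sup>2 = \<bar>q - p\<bar> * \<bar>q - p\<bar>"
      by (simp add: power2_eq_square)
    then show ?thesis
      unfolding dist_PQ_sq by (simp only: mult.assoc mult.commute mult.left_commute)
  qed
  ultimately have cross: "\<bar>cross2 (Q - P) (R - P)\<bar> = sqrt 3 / 2 * (dist P Q)\<^sup>2 \<longleftrightarrow>
      \<bar>m\<bar> * \<bar>cross2 u w\<bar> = sqrt 3 / 2 * \<bar>q - p\<bar> * (u \<bullet> u)"
    using \<open>p \<noteq> q\<close> by (simp add: mult.assoc)
  show ?thesis
    using equilateral_iff_apex[OF \<open>P \<noteq> Q\<close>] inner cross by (simp add: P_def Q_def R_def)
qed

section \<open>Wedged equilateral triangles\<close>

definition wedged_equilateral ::
    "real^2 \<Rightarrow> real^2 \<Rightarrow> real^2 \<Rightarrow> real^2 \<Rightarrow> real^2 \<Rightarrow> real^2 \<Rightarrow> bool" where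
  "wedged_equilateral X Y Z P Q R \<longleftrightarrow> equilateral P Q R
     \<and> convex hull {P, Q, R} \<subseteq> convex hull {X, Y, Z} \<and> closed_segment P Q \<subseteq> closed_segment X Y"

lemma eq_area_mono: "0 \<le> s \<Longrightarrow> s \<le> t \<Longrightarrow> eq_area s \<le> eq_area t"
  unfolding eq_area_def by (intro mult_left_mono power_mono) auto

lemma WET_area_eqI:
  assumes "wedged_equilateral X Y Z P Q R"
    and "\<And>P' Q' R'. wedged_equilateral X Y Z P' Q' R' \<Longrightarrow> dist P' Q' \<le> dist P Q"
  shows "WET_area X Y Z = eq_area (dist P Q)"
  unfolding WET_area_def wedged_equilateral_def[symmetric]
  by (rule cSup_eq_maximum) (use assms in \<open>auto intro!: eq_area_mono\<close>)

lemma WET_area_commute: "WET_area X Y Z = WET_area Y X Z"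
  unfolding WET_area_def by (simp add: insert_commute closed_segment_commute)

lemma wedged_equilateral_side_le:
  assumes "wedged_equilateral X Y Z P Q R"
  shows "dist P Q \<le> dist X Y"
proof -
  have P: "P \<in> closed_segment X Y" and Q: "Q \<in> closed_segment X Y"
    using assms by (auto simp: wedged_equilateral_def subset_closed_segment)
  have "dist P Q \<le> dist P X \<or> dist P Q \<le> dist P Y"
    using dist_decreases_closed_segment[OF Q] .
  moreover have "dist P X \<le> dist X Y" "dist P Y \<le> dist X Y"
    using dist_in_closed_segment[OF P] by auto
  ultimately show ?thesis
    by linarith
qed

lemma wedged_equilateral_coordinates:
  assumes "wedged_equilateral X Y Z P Q R"
  obtains p q l m where "0 \<le> p" "p \<le> 1" "0 \<le> q" "q \<le> 1" "0 \<le> l" "0 \<le> m"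
    and "P = X + p *\<^sub>R (Y - X)" and "Q = X + q *\<^sub>R (Y - X)"
    and "R = X + l *\<^sub>R (Y - X) + m *\<^sub>R (Z - X)"
proof -
  have "P \<in> closed_segment X Y" "Q \<in> closed_segment X Y" "R \<in> convex hull {X, Y, Z}"
    using assms hull_subset[of "{P, Q, R}"]
    by (auto simp: wedged_equilateral_def subset_closed_segment)
  then obtain p q a l m where "0 \<le> p" "p \<le> 1" "0 \<le> q" "q \<le> 1" "0 \<le> l" "0 \<le> m"
    and P: "P = (1 - p) *\<^sub>R X + p *\<^sub>R Y" and Q: "Q = (1 - q) *\<^sub>R X + q *\<^sub>R Y"
    and R: "R = a *\<^sub>R X + l *\<^sub>R Y + m *\<^sub>R Z" and "a + l + m = 1"
    unfolding in_segment convex_hull_3 by blast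
  have "R = (a + l + m) *\<^sub>R X + l *\<^sub>R (Y - X) + m *\<^sub>R (Z - X)"
    by (simp add: R algebra_simps)
  then have "R = X + l *\<^sub>R (Y - X) + m *\<^sub>R (Z - X)"
    by (simp only: \<open>a + l + m = 1\<close> scaleR_one)
  moreover have "P = X + p *\<^sub>R (Y - X)" "Q = X + q *\<^sub>R (Y - X)"
    by (simp_all add: P Q algebra_simps)
  ultimately show thesis
    using that \<open>0 \<le> p\<close> \<open>p \<le> 1\<close> \<open>0 \<le> q\<close> \<open>q \<le> 1\<close> \<open>0 \<le> l\<close> \<open>0 \<le> m\<close> by blast
qed

lemma wedged_equilateral_side_bound:
  assumes "wedged_equilateral X Y Z P Q R"
  shows "dist P Q * (sqrt 3 * ((Y - X) \<bullet> (Z - X)) + \<bar>cross2 (Y - X) (Z - X)\<bar>)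
    \<le> 2 * \<bar>cross2 (Y - X) (Z - X)\<bar> * dist X Y"
proof -
  define u w D K where "u = Y - X" and "w = Z - X" and "D = u \<bullet> w" and "K = \<bar>cross2 u w\<bar>"
  obtain p q l m where "0 \<le> p" "p \<le> 1" "0 \<le> q" "q \<le> 1" "0 \<le> l" "0 \<le> m"
    and P: "P = X + p *\<^sub>R u" and Q: "Q = X + q *\<^sub>R u" and R: "R = X + l *\<^sub>R u + m *\<^sub>R w"
    using wedged_equilateral_coordinates[OF assms] unfolding u_def w_def .
  have "P \<noteq> Q" and "equilateral P Q R"
    using assms by (simp_all add: wedged_equilateral_def equilateral_def)
  then have "p \<noteq> q" "u \<noteq> 0"
    using P Q by auto
  have dist_PQ: "dist P Q = \<bar>q - p\<bar> * norm u"
    by (simp add: P Q dist_norm abs_minus_commute flip: scaleR_diff_left)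
  from \<open>equilateral P Q R\<close> have apex_foot: "(l - p) * (u \<bullet> u) + m * D = (q - p) / 2 * (u \<bullet> u)"
    and apex_height: "m * K = sqrt 3 / 2 * \<bar>q - p\<bar> * (u \<bullet> u)"
    using equilateral_on_base_iff[OF \<open>u \<noteq> 0\<close> \<open>p \<noteq> q\<close>] \<open>0 \<le> m\<close>
    by (simp_all add: P Q R D_def K_def)
  have "sqrt 3 / 2 * \<bar>q - p\<bar> * (u \<bullet> u) * D = K * (m * D)"
    unfolding apex_height[symmetric] by (simp only: mult.assoc mult.commute mult.left_commute)
  also have "\<dots> \<le> K * ((p + q) / 2 * (u \<bullet> u))"
  proof (rule mult_left_mono)
    have "m * D = (p + q) / 2 * (u \<bullet> u) - l * (u \<bullet> u)"
      using apex_foot by (simp add: algebra_simps)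
    then show "m * D \<le> (p + q) / 2 * (u \<bullet> u)"
      using \<open>0 \<le> l\<close> by simp
  qed (simp add: K_def)
  also have "\<dots> \<le> K * ((2 - \<bar>q - p\<bar>) / 2 * (u \<bullet> u))"
    using \<open>0 \<le> p\<close> \<open>p \<le> 1\<close> \<open>0 \<le> q\<close> \<open>q \<le> 1\<close>
    by (intro mult_left_mono mult_right_mono) (auto simp: K_def abs_if)
  finally have "(u \<bullet> u) * (\<bar>q - p\<bar> * (sqrt 3 * D + K)) \<le> (u \<bullet> u) * (2 * K)"
    by (simp add: algebra_simps)
  then have bound: "\<bar>q - p\<bar> * (sqrt 3 * D + K) \<le> 2 * K"
    using \<open>u \<noteq> 0\<close> by simp
  have "dist P Q * (sqrt 3 * D + K) = \<bar>q - p\<bar> * (sqrt 3 * D + K) * norm u"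
    by (simp add: dist_PQ ac_simps)
  also have "\<dots> \<le> 2 * K * norm u"
    by (rule mult_right_mono[OF bound norm_ge_zero])
  also have "\<dots> = 2 * K * dist X Y"
    by (simp add: u_def dist_norm norm_minus_commute)
  finally show ?thesis
    by (simp only: D_def K_def u_def w_def)
qed

lemma wedged_equilateral_on_side:
  fixes X Y Z :: "real^2" and p q l m :: real
  defines "u \<equiv> Y - X" and "w \<equiv> Z - X"
  assumes "u \<noteq> 0" and pq: "0 \<le> p" "p < q" "q \<le> 1" and lm: "0 \<le> l" "0 \<le> m" "l + m \<le> 1"
    and apex_foot: "(l - p) * (u \<bullet> u) + m * (u \<bullet> w) = (q - p) / 2 * (u \<bullet> u)"
    and apex_height: "m * \<bar>cross2 u w\<bar> = sqrt 3 / 2 * (q - p) * (u \<bullet> u)"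
  shows "wedged_equilateral X Y Z (X + p *\<^sub>R u) (X + q *\<^sub>R u) (X + l *\<^sub>R u + m *\<^sub>R w)"
proof -
  define P Q R where "P = X + p *\<^sub>R u" and "Q = X + q *\<^sub>R u" and "R = X + l *\<^sub>R u + m *\<^sub>R w"
  have "P \<in> closed_segment X Y"
    unfolding in_segment P_def u_def using pq by (auto intro!: exI[of _ p] simp: algebra_simps)
  have "Q \<in> closed_segment X Y"
    unfolding in_segment Q_def u_def using pq by (auto intro!: exI[of _ q] simp: algebra_simps)
  then have seg: "closed_segment P Q \<subseteq> closed_segment X Y"
    using \<open>P \<in> closed_segment X Y\<close> by (simp add: subset_closed_segment)
  have "closed_segment X Y \<subseteq> convex hull {X, Y, Z}"
    unfolding segment_convex_hull by (rule hull_mono) auto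
  moreover have "R \<in> convex hull {X, Y, Z}"
    unfolding convex_hull_3 using lm
    by (intro CollectI exI[of _ "1 - l - m"] exI[of _ l] exI[of _ m])
      (auto simp: R_def u_def w_def algebra_simps)
  ultimately have hull: "convex hull {P, Q, R} \<subseteq> convex hull {X, Y, Z}"
    using \<open>P \<in> closed_segment X Y\<close> \<open>Q \<in> closed_segment X Y\<close>
    by (intro hull_minimal) (auto simp: convex_convex_hull)
  have "equilateral P Q R"
    using equilateral_on_base_iff[of u p q] assms pq lm by (simp add: P_def Q_def R_def)
  with hull seg show ?thesis
    by (simp add: wedged_equilateral_def flip: P_def Q_def R_def)
qed

lemma wedged_equilateral_on_whole_side:
  fixes X Y Z :: "real^2"
  defines "u \<equiv> Y - X" and "w \<equiv> Z - X"
  assumes "u \<noteq> 0" and "cross2 u w \<noteq> 0"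
    and at_X: "sqrt 3 * (u \<bullet> w) \<le> \<bar>cross2 u w\<bar>" and at_Y: "sqrt 3 * (u \<bullet> u - u \<bullet> w) \<le> \<bar>cross2 u w\<bar>"
  shows "\<exists>R. wedged_equilateral X Y Z X Y R"
proof -
  define K where "K = \<bar>cross2 u w\<bar>"
  have "K > 0" "u \<bullet> u > 0"
    using assms(3,4) by (simp_all add: K_def)
  define m where "m = sqrt 3 / 2 * (u \<bullet> u) / K"
  define l where "l = 1 / 2 - m * (u \<bullet> w) / (u \<bullet> u)"
  have "wedged_equilateral X Y Z (X + 0 *\<^sub>R u) (X + 1 *\<^sub>R u) (X + l *\<^sub>R u + m *\<^sub>R w)"
  proof (rule wedged_equilateral_on_side[where X = X and Y = Y and Z = Z, folded u_def w_def])
    show "0 \<le> l"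
      using at_X \<open>K > 0\<close> \<open>u \<bullet> u > 0\<close> by (simp add: l_def m_def K_def field_simps)
    have "l + m = 1 / 2 + sqrt 3 * (u \<bullet> u - u \<bullet> w) / (2 * K)"
      using \<open>K > 0\<close> \<open>u \<bullet> u > 0\<close> by (simp add: l_def m_def field_simps)
    also have "\<dots> \<le> 1"
      using at_Y \<open>K > 0\<close> by (simp add: K_def field_simps)
    finally show "l + m \<le> 1" .
    show "(l - 0) * (u \<bullet> u) + m * (u \<bullet> w) = (1 - 0) / 2 * (u \<bullet> u)"
      using \<open>u \<bullet> u > 0\<close> by (simp add: l_def field_simps)
    show "m * \<bar>cross2 u w\<bar> = sqrt 3 / 2 * (1 - 0) * (u \<bullet> u)"
      using \<open>K > 0\<close> by (simp add: m_def K_def)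
  qed (use \<open>u \<noteq> 0\<close> \<open>K > 0\<close> \<open>u \<bullet> u > 0\<close> in \<open>simp_all add: m_def\<close>)
  then show ?thesis
    by (auto simp: u_def)
qed

lemma wedged_equilateral_apex_on_side:
  fixes X Y Z :: "real^2"
  defines "u \<equiv> Y - X" and "w \<equiv> Z - X"
  assumes "u \<noteq> 0" and "cross2 u w \<noteq> 0"
    and at_X: "\<bar>cross2 u w\<bar> \<le> sqrt 3 * (u \<bullet> w)" and at_Y: "sqrt 3 * (u \<bullet> u - u \<bullet> w) \<le> \<bar>cross2 u w\<bar>"
  shows "\<exists>P Q R. wedged_equilateral X Y Z P Q R
    \<and> dist P Q = 2 * \<bar>cross2 u w\<bar> * dist X Y / (sqrt 3 * (u \<bullet> w) + \<bar>cross2 u w\<bar>)"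
proof -
  define D K S where "D = u \<bullet> w" and "K = \<bar>cross2 u w\<bar>" and "S = sqrt 3 * (u \<bullet> w) + \<bar>cross2 u w\<bar>"
  have "K > 0"
    using assms(4) by (simp add: K_def)
  have "S > 0"
    using at_X \<open>K > 0\<close> by (simp add: S_def K_def)
  define p where "p = (sqrt 3 * D - K) / S"
  define m where "m = sqrt 3 * (u \<bullet> u) / S"
  have "1 - p = 2 * K / S"
    using \<open>S > 0\<close> by (simp add: p_def S_def D_def K_def field_simps)
  have "wedged_equilateral X Y Z (X + p *\<^sub>R u) (X + 1 *\<^sub>R u) (X + 0 *\<^sub>R u + m *\<^sub>R w)"
  proof (rule wedged_equilateral_on_side[where X = X and Y = Y and Z = Z, folded u_def w_def])
    show "0 \<le> p"
      using at_X \<open>S > 0\<close> by (simp add: p_def D_def K_def)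
    have "2 * K / S > 0"
      using \<open>K > 0\<close> \<open>S > 0\<close> by simp
    then show "p < 1"
      using \<open>1 - p = 2 * K / S\<close> by linarith
    show "0 + m \<le> 1"
      using at_Y \<open>S > 0\<close> by (simp add: m_def S_def field_simps)
    show "(0 - p) * (u \<bullet> u) + m * (u \<bullet> w) = (1 - p) / 2 * (u \<bullet> u)"
      unfolding \<open>1 - p = 2 * K / S\<close> D_def[symmetric] using \<open>S > 0\<close>
      by (simp add: p_def m_def field_simps)
    show "m * \<bar>cross2 u w\<bar> = sqrt 3 / 2 * (1 - p) * (u \<bullet> u)"
      unfolding \<open>1 - p = 2 * K / S\<close> using \<open>S > 0\<close> by (simp add: m_def K_def)
  qed (use \<open>u \<noteq> 0\<close> \<open>S > 0\<close> in \<open>simp_all add: m_def\<close>)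
  moreover have "dist (X + p *\<^sub>R u) (X + 1 *\<^sub>R u) = norm ((1 - p) *\<^sub>R u)"
    by (simp add: dist_norm norm_minus_commute algebra_simps)
  moreover have "norm ((1 - p) *\<^sub>R u) = 2 * K * dist X Y / S"
    using \<open>1 - p = 2 * K / S\<close> \<open>K > 0\<close> \<open>S > 0\<close>
    by (simp add: u_def dist_norm norm_minus_commute)
  ultimately show ?thesis
    unfolding K_def S_def by metis
qed

lemma WET_area_full_side:
  assumes "\<not> collinear {X, Y, Z}" and "pi / 3 \<le> angle_at X Y Z" and "pi / 3 \<le> angle_at Y Z X"
  shows "WET_area X Y Z = eq_area (dist X Y)"
proof -
  obtain R where "wedged_equilateral X Y Z X Y R"
    using wedged_equilateral_on_whole_side[of Y X Z] distinct_if_not_collinear[OF assms(1)]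
      cross2_nonzero_if_not_collinear[OF assms(1)] sqrt3_inner_le_cross_if_angle_at_ge[OF assms(2)]
      sqrt3_inner_le_cross_if_angle_at_ge'[OF assms(3)]
    by auto
  then show ?thesis
    by (rule WET_area_eqI) (rule wedged_equilateral_side_le)
qed

lemma WET_area_small_angle:
  assumes "\<not> collinear {X, Y, Z}" and "angle_at X Y Z \<le> pi / 3" and "pi / 3 \<le> angle_at Y Z X"
  shows "WET_area X Y Z = eq_area (dist X Y * sin (angle_at X Y Z) / sin (angle_at X Y Z + pi / 3))"
proof -
  define K S where "K = \<bar>cross2 (Y - X) (Z - X)\<bar>"
    and "S = sqrt 3 * ((Y - X) \<bullet> (Z - X)) + \<bar>cross2 (Y - X) (Z - X)\<bar>"
  have "K > 0"
    using cross2_nonzero_if_not_collinear[OF assms(1)] by (simp add: K_def)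
  have "K \<le> sqrt 3 * ((Y - X) \<bullet> (Z - X))"
    using cross_le_sqrt3_inner_if_angle_at_le[OF assms(2)] by (simp add: K_def)
  then have "S > 0"
    using \<open>K > 0\<close> by (simp add: S_def K_def)
  obtain P Q R where "wedged_equilateral X Y Z P Q R" and side: "dist P Q = 2 * K * dist X Y / S"
    using wedged_equilateral_apex_on_side[of Y X Z] distinct_if_not_collinear[OF assms(1)]
      cross2_nonzero_if_not_collinear[OF assms(1)] cross_le_sqrt3_inner_if_angle_at_le[OF assms(2)]
      sqrt3_inner_le_cross_if_angle_at_ge'[OF assms(3)]
    by (auto simp: K_def S_def)
  have "WET_area X Y Z = eq_area (2 * K * dist X Y / S)"
  proof (rule WET_area_eqI[OF \<open>wedged_equilateral X Y Z P Q R\<close>, unfolded side])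
    fix P' Q' R'
    assume "wedged_equilateral X Y Z P' Q' R'"
    then have "dist P' Q' * S \<le> 2 * K * dist X Y"
      using wedged_equilateral_side_bound by (simp add: S_def K_def)
    then show "dist P' Q' \<le> 2 * K * dist X Y / S"
      using \<open>S > 0\<close> by (simp add: pos_le_divide_eq)
  qed
  moreover have "2 * K * dist X Y / S = dist X Y * sin (angle_at X Y Z) / sin (angle_at X Y Z + pi / 3)"
  proof -
    define n where "n = norm (Y - X) * norm (Z - X)"
    have "n > 0"
      using distinct_if_not_collinear[OF assms(1)] by (simp add: n_def)
    have "sin (angle_at X Y Z) = K / n"
      using sin_angle_at[of Y X Z, folded n_def] \<open>n > 0\<close> by (simp add: K_def field_simps)
    moreover have "sin (angle_at X Y Z + pi / 3) = S / (2 * n)"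
      using sin_angle_at_add_pi_div_3[of Y X Z, folded n_def] \<open>n > 0\<close> by (simp add: S_def field_simps)
    ultimately show ?thesis
      using \<open>n > 0\<close> \<open>S > 0\<close> by simp
  qed
  ultimately show ?thesis
    by simp
qed

lemma sin_le_sin_if_sum_le_pi:
  fixes x y :: real
  assumes "0 \<le> x" "x \<le> y" "x + y \<le> pi"
  shows "sin x \<le> sin y"
proof -
  have "0 \<le> sin ((y - x) / 2)" "0 \<le> cos ((y + x) / 2)"
    using assms by (auto intro!: sin_ge_zero cos_ge_zero)
  then have "0 \<le> 2 * sin ((y - x) / 2) * cos ((y + x) / 2)"
    by simp
  then show ?thesis
    using sin_diff_sin[of y x] by linarith
qed

lemma sin_le_sin_add_pi_div_3:
  fixes \<alpha> \<beta> \<gamma> :: real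
  assumes "\<alpha> + \<beta> + \<gamma> = pi" "0 \<le> \<alpha>" "pi / 3 \<le> \<beta>" "\<alpha> + \<beta> / 2 \<le> 2 * pi / 3"
  shows "sin \<alpha> \<le> sin (\<gamma> + pi / 3)"
proof -
  have "sin \<alpha> \<le> sin (\<alpha> + \<beta> - pi / 3)"
    using assms by (intro sin_le_sin_if_sum_le_pi) auto
  also have "\<dots> = sin (pi - (\<gamma> + pi / 3))"
    using assms(1) by (intro arg_cong[where f = sin]) linarith
  also have "\<dots> = sin (\<gamma> + pi / 3)"
    by (rule sin_pi_minus)
  finally show ?thesis .
qed

theorem mainTheorem2:
  fixes A B C :: "real^2"
  assumes noncol: "\<not> collinear {A, B, C}"
    and sides: "dist B C > dist C A" "dist C A > dist A B"
    and beta: "pi / 3 \<le> angle_at B C A" "angle_at B C A < 4 * pi / 9"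
    and alpha: "pi / 3 < angle_at A B C" "angle_at A B C < pi / 2"
    and sum: "angle_at A B C + angle_at B C A / 2 < 2 * pi / 3"
  shows "WET_area A B C = Max {WET_area B C A, WET_area C A B, WET_area A B C}
       \<and> WET_area C A B = Min {WET_area B C A, WET_area C A B, WET_area A B C}"
proof -
  define \<alpha> \<beta> \<gamma> where "\<alpha> = angle_at A B C" and "\<beta> = angle_at B C A" and "\<gamma> = angle_at C A B"
  define f where "f = sin \<gamma> / sin (\<gamma> + pi / 3)"
  have "\<alpha> + \<beta> + \<gamma> = pi"
    using angle_sum_triangle[OF noncol] by (simp add: \<alpha>_def \<beta>_def \<gamma>_def)
  then have "\<gamma> < pi / 3"
    using alpha(1) beta(1) by (simp add: \<alpha>_def \<beta>_def)
  have Wc: "WET_area A B C = eq_area (dist A B)"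
    using WET_area_full_side[OF noncol] alpha(1) beta(1) by simp
  have Wb: "WET_area C A B = eq_area (dist C A * f)"
    using WET_area_small_angle[of C A B] noncol alpha(1) \<open>\<gamma> < pi / 3\<close>
    by (simp add: f_def \<gamma>_def insert_commute)
  have Wa: "WET_area B C A = eq_area (dist B C * f)"
    using WET_area_small_angle[of C B A] noncol beta(1) \<open>\<gamma> < pi / 3\<close>
      angle_at_commute[of C B A] angle_at_commute[of B A C]
    by (simp add: WET_area_commute[of B C] f_def \<gamma>_def dist_commute insert_commute)
  have "0 \<le> \<gamma>"
    using angle_at_bounds by (simp add: \<gamma>_def)
  then have "sin (\<gamma> + pi / 3) > 0" "f \<ge> 0"
    using \<open>\<gamma> < pi / 3\<close> by (auto simp: f_def intro!: sin_gt_zero sin_ge_zero divide_nonneg_pos)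
  have "sin \<alpha> \<le> sin (\<gamma> + pi / 3)"
    using \<open>\<alpha> + \<beta> + \<gamma> = pi\<close> alpha(1) beta(1) sum
    by (intro sin_le_sin_add_pi_div_3) (auto simp: \<alpha>_def \<beta>_def)
  then have "dist A B * sin \<alpha> \<le> dist A B * sin (\<gamma> + pi / 3)"
    by (simp add: mult_left_mono)
  then have "dist B C * f \<le> dist A B"
    using law_of_sines[OF noncol] \<open>sin (\<gamma> + pi / 3) > 0\<close>
    by (simp add: f_def \<alpha>_def \<gamma>_def pos_divide_le_eq)
  moreover have "dist C A * f \<le> dist B C * f"
    using sides(1) \<open>f \<ge> 0\<close> by (simp add: mult_right_mono)
  ultimately have "WET_area C A B \<le> WET_area B C A" "WET_area B C A \<le> WET_area A B C"
    unfolding Wa Wb Wc using \<open>f \<ge> 0\<close> by (auto intro!: eq_area_mono)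
  then show ?thesis
    by (simp add: max_def min_def)
qed

end
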